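(* Let $A,B$ be convex subsets of a real topological vector space $X$ with $A\subseteq B\subseteq\overline{A}$. Then $\operatorname{fri} A\subseteq\operatorname{fri} B\subseteq\operatorname{fri}\overline{A}$.
   Context: For a convex set $C$, a convex subset $F\subseteq C$ is a face of $C$ if for every $x\in F$ and all $y,z\in C$ with $x\in(y,z)=\{(1-t)y+tz:t\in(0,1)\}$ we have $y,z\in F$; $F_{\min}(x,C)$ is the intersection of all faces of $C$ containing $x\in C$. The face relative interior is $\operatorname{fri} C=\{x\in C: C\subseteq\overline{F_{\min}(x,C)}\}$. *)

theory Defs
  imports "HOL-Analysis.Analysis"
begin

text \<open>Real topological vector space: a real vector space with a topology making
  addition and scalar multiplication jointly continuous (negation continuity is
  part of topological_group_add). No separation axiom is assumed.\<close>
class real_tvs = topological_ab_group_add + real_vector +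
  assumes tendsto_scaleR_Pair:
    "LIM p (nhds a \<times>\<^sub>F nhds x). fst p *\<^sub>R snd p :> nhds (a *\<^sub>R x)"

definition oseg :: "'a::real_vector \<Rightarrow> 'a \<Rightarrow> 'a set" where
  "oseg y z = {(1 - t) *\<^sub>R y + t *\<^sub>R z | t. 0 < t \<and> t < 1}"

definition is_face :: "'a::real_vector set \<Rightarrow> 'a set \<Rightarrow> bool" where
  "is_face F C \<longleftrightarrow> convex F \<and> F \<subseteq> C \<and>
     (\<forall>x\<in>F. \<forall>y\<in>C. \<forall>z\<in>C. x \<in> oseg y z \<longrightarrow> y \<in> F \<and> z \<in> F)"

definition Fmin :: "'a::real_vector \<Rightarrow> 'a set \<Rightarrow> 'a set" where
  "Fmin x C = \<Inter> {F. is_face F C \<and> x \<in> F}"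

definition fri :: "'a::{real_vector,topological_space} set \<Rightarrow> 'a set" where
  "fri C = {x \<in> C. C \<subseteq> closure (Fmin x C)}"

end

theory Submission
  imports Defs
begin

text \<open>A face of T meets a convex S \<subseteq> T in a face of S, so Fmin x S \<subseteq> Fmin x T.
  Hence if S \<subseteq> T \<subseteq> closure S and S \<subseteq> closure (Fmin x S), then also
  T \<subseteq> closure S \<subseteq> closure (Fmin x T). Apply this to A \<subseteq> B and to B \<subseteq> closure A.\<close>

lemma is_face_Int_convex_subset:
  assumes "is_face F T" "convex S" "S \<subseteq> T"
  shows "is_face (F \<inter> S) S"
proof -
  have "convex (F \<inter> S)"
    using assms(1,2) unfolding is_face_def by (simp add: convex_Int)
  moreover have "y \<in> F \<and> z \<in> F"
    if "u \<in> F" "y \<in> S" "z \<in> S" "u \<in> oseg y z" for u y z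
    using assms(1,3) that unfolding is_face_def by blast
  ultimately show ?thesis unfolding is_face_def by blast
qed

lemma Fmin_mono_convex_subset:
  assumes "convex S" "S \<subseteq> T" "x \<in> S"
  shows "Fmin x S \<subseteq> Fmin x T"
  unfolding Fmin_def
proof (intro subsetI InterI)
  fix y F
  assume y: "y \<in> \<Inter> {F. is_face F S \<and> x \<in> F}" and F: "F \<in> {F. is_face F T \<and> x \<in> F}"
  have "F \<inter> S \<in> {F. is_face F S \<and> x \<in> F}"
    using F is_face_Int_convex_subset[OF _ assms(1,2)] assms(3) by blast
  with y show "y \<in> F" by blast
qed

lemma fri_mono_between_closure:
  assumes "convex S" "S \<subseteq> T" "T \<subseteq> closure S"
  shows "fri S \<subseteq> fri T"
proof
  fix x assume "x \<in> fri S"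
  hence x: "x \<in> S" "S \<subseteq> closure (Fmin x S)" unfolding fri_def by auto
  have "T \<subseteq> closure S" by fact
  also have "\<dots> \<subseteq> closure (Fmin x S)" using x(2) closed_closure by (rule closure_minimal)
  also have "\<dots> \<subseteq> closure (Fmin x T)"
    using Fmin_mono_convex_subset[OF assms(1,2) x(1)] by (rule closure_mono)
  finally show "x \<in> fri T" using x(1) assms(2) unfolding fri_def by blast
qed

theorem proposition4p8:
  fixes A B :: "'a::real_tvs set"
  assumes "convex A" and "convex B"
    and "A \<subseteq> B" and "B \<subseteq> closure A"
  shows "fri A \<subseteq> fri B \<and> fri B \<subseteq> fri (closure A)"
proof
  show "fri A \<subseteq> fri B" using assms(1,3,4) by (rule fri_mono_between_closure)
  have "closure A \<subseteq> closure B" using assms(3) by (rule closure_mono)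
  with assms(2,4) show "fri B \<subseteq> fri (closure A)" by (rule fri_mono_between_closure)
qed

end
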